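(* Let $(V,\varphi,\xi,\eta,g)$ be as in the context and let $\mathcal{F}$ be the space of tensors defined there. The operators $p_1,p_2,p_3,p_4:\mathcal{F}\to\mathcal{F}$ satisfy: (i) $p_i\circ p_i=p_i$ for $i=1,2,3,4$; (ii) $p_1+p_2+p_3+p_4=\mathrm{id}$; (iii) $p_i\circ p_j=0$ for $i\neq j$. Moreover each $p_i$ commutes with the action of the group $G$, i.e. $p_i(\lambda(a)F)=\lambda(a)(p_iF)$ for all $a\in G$, $F\in\mathcal{F}$.
   Context: Let $V$ be a real vector space of dimension $2n+1$ with an endomorphism $\varphi$, a vector $\xi$ and a linear form $\eta$ such that $\varphi\xi=0$, $\eta\circ\varphi=0$, $\eta(\xi)=1$, $\varphi^2=\mathrm{id}-\eta\otimes\xi$, and such that $\varphi$ restricted to $\mathbb{D}=\ker\eta$ has eigenvalues $\pm1$ with eigenspaces of equal dimension $n$. Let $g$ be a nondegenerate symmetric bilinear form (pseudo-Euclidean metric) on $V$ with $g(\varphi X,\varphi Y)=-g(X,Y)+\eta(X)\eta(Y)$; then $\eta(X)=g(X,\xi)$. Write $hX=X-\eta(X)\xi\in\mathbb{D}$. Fix a basis $\{e_1,\dots,e_{2n}\}$ of $\mathbb{D}$ and write $Y=Y^ie_i+\eta(Y)\xi$ (summation over $i=1,\dots,2n$). Let $\mathcal{F}$ be the vector space of all $(0,3)$-tensors $F$ on $V$ of the form $F(X,Y,Z)=Y^ig(\mathcal{A}_{e_i}X,Z)+\eta(Y)g(\mathcal{A}_\xi X,\varphi Z)$, where $\mathcal{A}_{e_i}:V\to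 V$ ($i=1,\dots,2n$) and $\mathcal{A}_\xi:V\to\mathbb{D}$ are linear maps satisfying, for all $X\in V$ and all $i,j$: $g(\mathcal{A}_{e_i}X,e_j)=-g(\mathcal{A}_{e_j}X,e_i)$; $\mathcal{A}_{\varphi e_i}X=-\varphi(\mathcal{A}_{e_i}X)-g(\mathcal{A}_\xi X,e_i)\xi$ (with $\mathcal{A}_{\varphi e_i}$ defined by linearity in the index); $\eta(\mathcal{A}_{e_i}X)=-g(\mathcal{A}_\xi X,\varphi e_i)$; $\eta(\mathcal{A}_\xi X)=0$. Let $G$ be the group of linear automorphisms $a$ of $V$ with $a\varphi=\varphi a$, $a\xi=\xi$, $\eta\circ a=\eta$, $g(aX,aY)=g(X,Y)$ (the structure group $\mathbb{U}(n,\mathbb{R})\times\mathrm{Id}$), acting on $\mathcal{F}$ by $(\lambda(a)F)(X,Y,Z)=F(a^{-1}X,a^{-1}Y,a^{-1}Z)$. Define $p_1(F)(X,Y,Z)=F(hX,hY,hZ)$; $p_2(F)(X,Y,Z)=-\eta(Y)F(hX,hZ,\xi)+\eta(Z)F(hX,hY,\xi)$; $p_3(F)(X,Y,Z)=\eta(X)F(\xi,hY,hZ)$; $p_4(F)(X,Y,Z)=\eta(X)\eta(Y)F(\xi,\xi,hZ)-\eta(X)\eta(Z)F(\xi,\xi,hY)$. *)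

theory Defs
  imports "HOL-Analysis.Analysis"
begin

type_synonym 'v tensor3 = "'v \<Rightarrow> 'v \<Rightarrow> 'v \<Rightarrow> real"

definition distD :: "('v \<Rightarrow> real) \<Rightarrow> 'v set" where
  "distD \<eta> = {X. \<eta> X = 0}"

definition hproj :: "('v \<Rightarrow> real) \<Rightarrow> 'v::real_vector \<Rightarrow> 'v \<Rightarrow> 'v" where
  "hproj \<eta> \<xi> X = X - \<eta> X *\<^sub>R \<xi>"

definition apn_structure ::
  "nat \<Rightarrow> ('v::euclidean_space \<Rightarrow> 'v) \<Rightarrow> 'v \<Rightarrow> ('v \<Rightarrow> real) \<Rightarrow> ('v \<Rightarrow> 'v \<Rightarrow> real) \<Rightarrow> bool" where
  "apn_structure n \<phi> \<xi> \<eta> g \<longleftrightarrow>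
     DIM('v) = 2 * n + 1 \<and>
     linear \<phi> \<and> linear \<eta> \<and>
     \<phi> \<xi> = 0 \<and> (\<forall>X. \<eta> (\<phi> X) = 0) \<and> \<eta> \<xi> = 1 \<and>
     (\<forall>X. \<phi> (\<phi> X) = X - \<eta> X *\<^sub>R \<xi>) \<and>
     dim {X. \<eta> X = 0 \<and> \<phi> X = X} = n \<and>
     dim {X. \<eta> X = 0 \<and> \<phi> X = - X} = n \<and>
     (\<forall>X. linear (g X)) \<and> (\<forall>X Y. g X Y = g Y X) \<and>
     (\<forall>X. (\<forall>Y. g X Y = 0) \<longrightarrow> X = 0) \<and>
     (\<forall>X Y. g (\<phi> X) (\<phi> Y) = - g X Y + \<eta> X * \<eta> Y)"

text \<open>The family A_{e_i} (i = 1..2n) indexed by a basis of D and extended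
  linearly in the index is represented by a map A u X, linear in X and in the index u;
  the basis conditions are then equivalently required for all u, w in D.\<close>
definition Fspace ::
  "('v::euclidean_space \<Rightarrow> 'v) \<Rightarrow> 'v \<Rightarrow> ('v \<Rightarrow> real) \<Rightarrow> ('v \<Rightarrow> 'v \<Rightarrow> real) \<Rightarrow> 'v tensor3 set" where
  "Fspace \<phi> \<xi> \<eta> g = {F. \<exists>(A :: 'v \<Rightarrow> 'v \<Rightarrow> 'v) (A\<xi> :: 'v \<Rightarrow> 'v).
      (\<forall>u. linear (A u)) \<and> (\<forall>X. linear (\<lambda>u. A u X)) \<and> linear A\<xi> \<and>
      (\<forall>X. \<forall>u\<in>distD \<eta>. \<forall>w\<in>distD \<eta>. g (A u X) w = - g (A w X) u) \<and>
      (\<forall>X. \<forall>u\<in>distD \<eta>. A (\<phi> u) X = - \<phi> (A u X) - g (A\<xi> X) u *\<^sub>R \<xi>) \<and>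
      (\<forall>X. \<forall>u\<in>distD \<eta>. \<eta> (A u X) = - g (A\<xi> X) (\<phi> u)) \<and>
      (\<forall>X. \<eta> (A\<xi> X) = 0) \<and>
      F = (\<lambda>X Y Z. g (A (hproj \<eta> \<xi> Y) X) Z + \<eta> Y * g (A\<xi> X) (\<phi> Z))}"

definition struct_group ::
  "('v::real_vector \<Rightarrow> 'v) \<Rightarrow> 'v \<Rightarrow> ('v \<Rightarrow> real) \<Rightarrow> ('v \<Rightarrow> 'v \<Rightarrow> real) \<Rightarrow> ('v \<Rightarrow> 'v) set" where
  "struct_group \<phi> \<xi> \<eta> g = {a. linear a \<and> bij a \<and> a \<circ> \<phi> = \<phi> \<circ> a \<and> a \<xi> = \<xi> \<and>
      \<eta> \<circ> a = \<eta> \<and> (\<forall>X Y. g (a X) (a Y) = g X Y)}"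

definition lam :: "('v \<Rightarrow> 'v) \<Rightarrow> 'v tensor3 \<Rightarrow> 'v tensor3" where
  "lam a F = (\<lambda>X Y Z. F (inv a X) (inv a Y) (inv a Z))"

definition p1 :: "('v \<Rightarrow> real) \<Rightarrow> 'v::real_vector \<Rightarrow> 'v tensor3 \<Rightarrow> 'v tensor3" where
  "p1 \<eta> \<xi> F = (\<lambda>X Y Z. F (hproj \<eta> \<xi> X) (hproj \<eta> \<xi> Y) (hproj \<eta> \<xi> Z))"

definition p2 :: "('v \<Rightarrow> real) \<Rightarrow> 'v::real_vector \<Rightarrow> 'v tensor3 \<Rightarrow> 'v tensor3" where
  "p2 \<eta> \<xi> F = (\<lambda>X Y Z. - \<eta> Y * F (hproj \<eta> \<xi> X) (hproj \<eta> \<xi> Z) \<xi>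
                        + \<eta> Z * F (hproj \<eta> \<xi> X) (hproj \<eta> \<xi> Y) \<xi>)"

definition p3 :: "('v \<Rightarrow> real) \<Rightarrow> 'v::real_vector \<Rightarrow> 'v tensor3 \<Rightarrow> 'v tensor3" where
  "p3 \<eta> \<xi> F = (\<lambda>X Y Z. \<eta> X * F \<xi> (hproj \<eta> \<xi> Y) (hproj \<eta> \<xi> Z))"

definition p4 :: "('v \<Rightarrow> real) \<Rightarrow> 'v::real_vector \<Rightarrow> 'v tensor3 \<Rightarrow> 'v tensor3" where
  "p4 \<eta> \<xi> F = (\<lambda>X Y Z. \<eta> X * \<eta> Y * F \<xi> \<xi> (hproj \<eta> \<xi> Z)
                        - \<eta> X * \<eta> Z * F \<xi> \<xi> (hproj \<eta> \<xi> Y))"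

definition projs :: "('v \<Rightarrow> real) \<Rightarrow> 'v::real_vector \<Rightarrow> nat \<Rightarrow> 'v tensor3 \<Rightarrow> 'v tensor3" where
  "projs \<eta> \<xi> i = (if i = 1 then p1 \<eta> \<xi> else if i = 2 then p2 \<eta> \<xi>
                   else if i = 3 then p3 \<eta> \<xi> else p4 \<eta> \<xi>)"

end

theory Submission imports Defs begin

text \<open>Splitting every argument of F along V = D \<oplus> \<real>\<xi> writes F as a sum of eight pieces.
  The pieces with \<xi> in both of the last two slots vanish, and those with \<xi> in exactly one of
  them are related by the skew-symmetry F(X, \<xi>, hZ) = -F(X, hZ, \<xi>); what is left is
  p1 F + p2 F + p3 F + p4 F. Idempotency and orthogonality of the p_i only use
  \<eta> \<circ> h = 0, h \<xi> = 0, \<eta> \<xi> = 1 and that F vanishes when an argument is 0, and equivariance holds because the structure group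
  fixes \<xi> and \<eta> and so commutes with h. That p_i F lies in Fspace again is shown by exhibiting
  the pair (A, A\<xi>) that represents it.\<close>

locale eta_xi_splitting =
  fixes \<eta> :: "'v::real_vector \<Rightarrow> real" and \<xi> :: 'v
  assumes linear_eta: "linear \<eta>" and eta_xi [simp]: "\<eta> \<xi> = 1"
begin

abbreviation h :: "'v \<Rightarrow> 'v" where "h \<equiv> hproj \<eta> \<xi>"

lemmas eta_linear_simps [simp] =
  linear_add[OF linear_eta] linear_diff[OF linear_eta] linear_cmul[OF linear_eta]
  linear_0[OF linear_eta] linear_neg[OF linear_eta]

lemma eta_hproj [simp]: "\<eta> (h X) = 0"
  and hproj_xi [simp]: "h \<xi> = 0"
  and hproj_hproj [simp]: "h (h X) = h X"
  by (simp_all add: hproj_def)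

lemma hproj_decomp: "X = h X + \<eta> X *\<^sub>R \<xi>"
  by (simp add: hproj_def)

lemma linear_hproj: "linear h"
  by (rule linearI) (simp_all add: hproj_def algebra_simps)

lemmas hproj_linear_simps [simp] = linear_add[OF linear_hproj] linear_cmul[OF linear_hproj]

context
  fixes F :: "'v tensor3"
  assumes F_zero: "\<And>Y Z. F 0 Y Z = 0" "\<And>X Z. F X 0 Z = 0" "\<And>X Y. F X Y 0 = 0"
begin

lemma projs_idem: "projs \<eta> \<xi> i (projs \<eta> \<xi> i F) = projs \<eta> \<xi> i F"
  by (simp add: projs_def fun_eq_iff p1_def p2_def p3_def p4_def F_zero)

lemma projs_orthogonal:
  assumes "i \<in> {1..4}" "j \<in> {1..4}" "i \<noteq> j"
  shows "projs \<eta> \<xi> i (projs \<eta> \<xi> j F) = (\<lambda>X Y Z. 0)"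
proof -
  have "i \<in> {1, 2, 3, 4}" "j \<in> {1, 2, 3, 4}"
    using assms by auto
  with \<open>i \<noteq> j\<close> show ?thesis
    by (auto simp: projs_def fun_eq_iff p1_def p2_def p3_def p4_def F_zero)
qed

end

lemma projs_lam:
  assumes "linear a" "bij a" "a \<xi> = \<xi>" "\<eta> \<circ> a = \<eta>"
  shows "projs \<eta> \<xi> i (lam a F) = lam a (projs \<eta> \<xi> i F)"
proof -
  have inv_xi: "inv a \<xi> = \<xi>"
    using assms(2,3) by (metis bij_is_inj inv_f_f)
  have eta_inv [simp]: "\<eta> (inv a X) = \<eta> X" for X
    using assms(2,4) by (metis bij_inv_eq_iff comp_apply)
  have "a (h (inv a X)) = h X" for X
    using assms(2,3) linear_diff[OF assms(1)] linear_cmul[OF assms(1)]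
    by (simp add: hproj_def bij_is_surj surj_f_inv_f)
  then have inv_h [simp]: "inv a (h X) = h (inv a X)" for X
    using assms(2) by (metis bij_inv_eq_iff)
  show ?thesis
    by (simp add: projs_def fun_eq_iff p1_def p2_def p3_def p4_def lam_def inv_xi)
qed

end

locale apn =
  fixes n :: nat and \<phi> :: "'v::euclidean_space \<Rightarrow> 'v" and \<xi> :: 'v
    and \<eta> :: "'v \<Rightarrow> real" and g :: "'v \<Rightarrow> 'v \<Rightarrow> real"
  assumes apn: "apn_structure n \<phi> \<xi> \<eta> g"
begin

sublocale eta_xi_splitting \<eta> \<xi>
  using apn unfolding apn_structure_def eta_xi_splitting_def by simp

lemma linear_phi: "linear \<phi>" and phi_xi [simp]: "\<phi> \<xi> = 0"
  and eta_phi [simp]: "\<eta> (\<phi> X) = 0" and phi_phi [simp]: "\<phi> (\<phi> X) = X - \<eta> X *\<^sub>R \<xi>" and linear_g: "linear (g X)"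
  and g_sym: "g X Y = g Y X" and g_phi_phi: "g (\<phi> X) (\<phi> Y) = - g X Y + \<eta> X * \<eta> Y"
  using apn unfolding apn_structure_def by auto

lemmas phi_linear_simps [simp] =
  linear_add[OF linear_phi] linear_diff[OF linear_phi] linear_cmul[OF linear_phi]
  linear_0[OF linear_phi] linear_neg[OF linear_phi]

lemmas g_right_linear_simps [simp] =
  linear_add[OF linear_g] linear_diff[OF linear_g] linear_cmul[OF linear_g]
  linear_0[OF linear_g] linear_neg[OF linear_g]

lemma phi_hproj [simp]: "\<phi> (h X) = \<phi> X"
  by (simp add: hproj_def)

lemma linear_g_left: "linear (\<lambda>X. g X Y)"
proof -
  have "(\<lambda>X. g X Y) = g Y"
    by (rule ext) (rule g_sym)
  then show ?thesis
    using linear_g by simp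
qed

lemmas g_left_linear_simps [simp] =
  linear_add[OF linear_g_left] linear_diff[OF linear_g_left] linear_cmul[OF linear_g_left]
  linear_0[OF linear_g_left] linear_neg[OF linear_g_left]

lemma g_xi [simp]: "g X \<xi> = \<eta> X" and g_xi_left [simp]: "g \<xi> X = \<eta> X"
  using g_phi_phi[of X \<xi>] g_sym[of \<xi> X] by simp_all

definition adapted_maps :: "('v \<Rightarrow> 'v \<Rightarrow> 'v) \<Rightarrow> ('v \<Rightarrow> 'v) \<Rightarrow> bool" where
  "adapted_maps A A\<xi> \<longleftrightarrow> (\<forall>u. linear (A u)) \<and> (\<forall>X. linear (\<lambda>u. A u X)) \<and> linear A\<xi> \<and>
      (\<forall>X. \<forall>u\<in>distD \<eta>. \<forall>w\<in>distD \<eta>. g (A u X) w = - g (A w X) u) \<and>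
      (\<forall>X. \<forall>u\<in>distD \<eta>. A (\<phi> u) X = - \<phi> (A u X) - g (A\<xi> X) u *\<^sub>R \<xi>) \<and>
      (\<forall>X. \<forall>u\<in>distD \<eta>. \<eta> (A u X) = - g (A\<xi> X) (\<phi> u)) \<and>
      (\<forall>X. \<eta> (A\<xi> X) = 0)"

definition tensor_of :: "('v \<Rightarrow> 'v \<Rightarrow> 'v) \<Rightarrow> ('v \<Rightarrow> 'v) \<Rightarrow> 'v tensor3" where
  "tensor_of A A\<xi> = (\<lambda>X Y Z. g (A (h Y) X) Z + \<eta> Y * g (A\<xi> X) (\<phi> Z))"

lemma Fspace_iff: "F \<in> Fspace \<phi> \<xi> \<eta> g \<longleftrightarrow> (\<exists>A A\<xi>. adapted_maps A A\<xi> \<and> F = tensor_of A A\<xi>)"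
  unfolding Fspace_def adapted_maps_def tensor_of_def by blast

context
  fixes A :: "'v \<Rightarrow> 'v \<Rightarrow> 'v" and A\<xi> :: "'v \<Rightarrow> 'v"
  assumes adapted: "adapted_maps A A\<xi>"
begin

lemma linear_A: "linear (A u)" and linear_A_index: "linear (\<lambda>u. A u X)"
  and linear_A\<xi>: "linear A\<xi>"
  and A_skew: "u \<in> distD \<eta> \<Longrightarrow> w \<in> distD \<eta> \<Longrightarrow> g (A u X) w = - g (A w X) u"
  and A_phi: "u \<in> distD \<eta> \<Longrightarrow> A (\<phi> u) X = - \<phi> (A u X) - g (A\<xi> X) u *\<^sub>R \<xi>"
  and eta_A: "u \<in> distD \<eta> \<Longrightarrow> \<eta> (A u X) = - g (A\<xi> X) (\<phi> u)"
  and eta_A\<xi> [simp]: "\<eta> (A\<xi> X) = 0"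
  using adapted unfolding adapted_maps_def by blast+

lemmas A_linear_simps [simp] =
  linear_add[OF linear_A] linear_cmul[OF linear_A] linear_0[OF linear_A]
  linear_add[OF linear_A_index] linear_cmul[OF linear_A_index] linear_0[OF linear_A_index]
  linear_add[OF linear_A\<xi>] linear_cmul[OF linear_A\<xi>] linear_0[OF linear_A\<xi>]

lemma eta_A_hproj: "\<eta> (A (h u) X) = - g (A\<xi> X) (\<phi> u)"
  using eta_A[of "h u"] by (simp add: distD_def hproj_def)

lemma tensor_of_zero:
  "tensor_of A A\<xi> 0 Y Z = 0" "tensor_of A A\<xi> X 0 Z = 0" "tensor_of A A\<xi> X Y 0 = 0"
  by (simp_all add: tensor_of_def hproj_def)

lemma tensor_of_scaleR_first: "tensor_of A A\<xi> (c *\<^sub>R X) Y Z = c * tensor_of A A\<xi> X Y Z"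
  by (simp add: tensor_of_def algebra_simps)

lemma tensor_of_split_first:
  "tensor_of A A\<xi> X Y Z = tensor_of A A\<xi> (h X) Y Z + \<eta> X * tensor_of A A\<xi> \<xi> Y Z"
  by (subst hproj_decomp[of X]) (simp add: tensor_of_def algebra_simps)

lemma tensor_of_split_second:
  "tensor_of A A\<xi> X Y Z = tensor_of A A\<xi> X (h Y) Z + \<eta> Y * tensor_of A A\<xi> X \<xi> Z"
  by (simp add: tensor_of_def)

lemma tensor_of_split_third:
  "tensor_of A A\<xi> X Y Z = tensor_of A A\<xi> X Y (h Z) + \<eta> Z * tensor_of A A\<xi> X Y \<xi>"
  by (simp add: tensor_of_def hproj_def algebra_simps)

lemma tensor_of_xi_xi: "tensor_of A A\<xi> X \<xi> \<xi> = 0"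
  by (simp add: tensor_of_def)

lemma tensor_of_xi_skew: "tensor_of A A\<xi> X \<xi> (h Z) = - tensor_of A A\<xi> X (h Z) \<xi>"
  by (simp add: tensor_of_def eta_A_hproj)

lemma tensor_of_sum_projs:
  defines "F \<equiv> tensor_of A A\<xi>"
  shows "(\<lambda>X Y Z. p1 \<eta> \<xi> F X Y Z + p2 \<eta> \<xi> F X Y Z + p3 \<eta> \<xi> F X Y Z + p4 \<eta> \<xi> F X Y Z) = F"
proof (intro ext)
  fix X Y Z
  have split_first: "F X Y Z = F (h X) Y Z + \<eta> X * F \<xi> Y Z"
    unfolding F_def by (rule tensor_of_split_first)
  have split_horizontal:
    "F (h X) Y Z = F (h X) (h Y) (h Z) + \<eta> Z * F (h X) (h Y) \<xi> - \<eta> Y * F (h X) (h Z) \<xi>"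
    using tensor_of_split_second[of "h X" Y Z] tensor_of_split_third[of "h X" "h Y" Z]
      tensor_of_split_third[of "h X" \<xi> Z] tensor_of_xi_xi[of "h X"] tensor_of_xi_skew[of "h X" Z]
    unfolding F_def by simp
  have split_vertical:
    "F \<xi> Y Z = F \<xi> (h Y) (h Z) + \<eta> Y * F \<xi> \<xi> (h Z) - \<eta> Z * F \<xi> \<xi> (h Y)"
    using tensor_of_split_second[of \<xi> Y Z] tensor_of_split_third[of \<xi> "h Y" Z]
      tensor_of_split_third[of \<xi> \<xi> Z] tensor_of_xi_xi[of \<xi>] tensor_of_xi_skew[of \<xi> Y]
    unfolding F_def by simp
  show "p1 \<eta> \<xi> F X Y Z + p2 \<eta> \<xi> F X Y Z + p3 \<eta> \<xi> F X Y Z + p4 \<eta> \<xi> F X Y Z = F X Y Z"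
    unfolding p1_def p2_def p3_def p4_def split_first split_horizontal split_vertical
    by (simp add: algebra_simps)
qed

lemma tensor_of_compose_DD_in_Fspace:
  assumes "linear L"
  shows "(\<lambda>X Y Z. tensor_of A A\<xi> (L X) (h Y) (h Z)) \<in> Fspace \<phi> \<xi> \<eta> g"
proof -
  define A' where "A' u X = h (A u (L X))" for u X
  have "adapted_maps A' (\<lambda>_. 0)"
    unfolding adapted_maps_def
  proof (intro conjI allI ballI)
    show "linear (A' u)" for u
      by (rule linearI) (simp_all add: A'_def linear_add[OF assms] linear_cmul[OF assms])
    show "linear (\<lambda>u. A' u X)" for X
      by (rule linearI) (simp_all add: A'_def)
    show "g (A' u X) w = - g (A' w X) u" if "u \<in> distD \<eta>" "w \<in> distD \<eta>" for X u w
      using that A_skew[OF that, of "L X"] unfolding distD_def by (simp add: A'_def hproj_def)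
    show "A' (\<phi> u) X = - \<phi> (A' u X) - g 0 u *\<^sub>R \<xi>" if "u \<in> distD \<eta>" for X u
      using A_phi[OF that, of "L X"] by (simp add: A'_def hproj_def)
  qed (simp_all add: A'_def linear_zero)
  moreover have "(\<lambda>X Y Z. tensor_of A A\<xi> (L X) (h Y) (h Z)) = tensor_of A' (\<lambda>_. 0)"
    by (intro ext) (simp add: tensor_of_def A'_def hproj_def algebra_simps)
  ultimately show ?thesis
    unfolding Fspace_iff by blast
qed

lemma tensor_of_compose_xi_in_Fspace:
  assumes "linear L"
  shows "(\<lambda>X Y Z. - \<eta> Y * tensor_of A A\<xi> (L X) (h Z) \<xi> + \<eta> Z * tensor_of A A\<xi> (L X) (h Y) \<xi>)
    \<in> Fspace \<phi> \<xi> \<eta> g"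
proof -
  define A' where "A' u X = (- g (A\<xi> (L X)) (\<phi> u)) *\<^sub>R \<xi>" for u X
  have "adapted_maps A' (A\<xi> \<circ> L)"
    unfolding adapted_maps_def
  proof (intro conjI allI ballI)
    show "linear (A' u)" for u
      by (rule linearI) (simp_all add: A'_def linear_add[OF assms] linear_cmul[OF assms] algebra_simps)
    show "linear (\<lambda>u. A' u X)" for X
      by (rule linearI) (simp_all add: A'_def algebra_simps)
    show "linear (A\<xi> \<circ> L)"
      using assms linear_A\<xi> by (rule linear_compose)
    show "A' (\<phi> u) X = - \<phi> (A' u X) - g ((A\<xi> \<circ> L) X) u *\<^sub>R \<xi>" if "u \<in> distD \<eta>" for X u
      using that unfolding distD_def by (simp add: A'_def)
  qed (simp_all add: A'_def distD_def)
  moreover have "(\<lambda>X Y Z. - \<eta> Y * tensor_of A A\<xi> (L X) (h Z) \<xi> + \<eta> Z * tensor_of A A\<xi> (L X) (h Y) \<xi>)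
      = tensor_of A' (A\<xi> \<circ> L)"
    by (intro ext) (simp add: tensor_of_def A'_def eta_A_hproj algebra_simps)
  ultimately show ?thesis
    unfolding Fspace_iff by blast
qed

end

lemma Fspace_zero:
  assumes "F \<in> Fspace \<phi> \<xi> \<eta> g"
  shows "F 0 Y Z = 0" "F X 0 Z = 0" "F X Y 0 = 0"
  using assms tensor_of_zero unfolding Fspace_iff by blast+

lemma Fspace_projs_idem:
  assumes "F \<in> Fspace \<phi> \<xi> \<eta> g"
  shows "projs \<eta> \<xi> i (projs \<eta> \<xi> i F) = projs \<eta> \<xi> i F"
  using Fspace_zero[OF assms] by (rule projs_idem)

lemma Fspace_projs_orthogonal:
  assumes "F \<in> Fspace \<phi> \<xi> \<eta> g" "i \<in> {1..4}" "j \<in> {1..4}" "i \<noteq> j"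
  shows "projs \<eta> \<xi> i (projs \<eta> \<xi> j F) = (\<lambda>X Y Z. 0)"
  using Fspace_zero[OF assms(1)] assms(2-) by (rule projs_orthogonal)

lemma Fspace_sum_projs:
  assumes "F \<in> Fspace \<phi> \<xi> \<eta> g"
  shows "(\<lambda>X Y Z. p1 \<eta> \<xi> F X Y Z + p2 \<eta> \<xi> F X Y Z + p3 \<eta> \<xi> F X Y Z + p4 \<eta> \<xi> F X Y Z) = F"
  using assms tensor_of_sum_projs unfolding Fspace_iff by blast

lemma Fspace_projs_closed:
  assumes "F \<in> Fspace \<phi> \<xi> \<eta> g"
  shows "projs \<eta> \<xi> i F \<in> Fspace \<phi> \<xi> \<eta> g"
proof -
  obtain A A\<xi> where adapted: "adapted_maps A A\<xi>" and F: "F = tensor_of A A\<xi>"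
    using assms unfolding Fspace_iff by blast
  have linear_xi_part: "linear (\<lambda>X. \<eta> X *\<^sub>R \<xi>)"
    by (rule linearI) (simp_all add: algebra_simps)
  have "p3 \<eta> \<xi> F = (\<lambda>X Y Z. F (\<eta> X *\<^sub>R \<xi>) (h Y) (h Z))"
    by (simp add: F p3_def tensor_of_scaleR_first[OF adapted])
  moreover have "p4 \<eta> \<xi> F
      = (\<lambda>X Y Z. - \<eta> Y * F (\<eta> X *\<^sub>R \<xi>) (h Z) \<xi> + \<eta> Z * F (\<eta> X *\<^sub>R \<xi>) (h Y) \<xi>)"
    by (simp add: F p4_def fun_eq_iff algebra_simps
        tensor_of_scaleR_first[OF adapted] tensor_of_xi_skew[OF adapted])
  ultimately show ?thesis
    using tensor_of_compose_DD_in_Fspace[OF adapted] tensor_of_compose_xi_in_Fspace[OF adapted]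
      linear_hproj linear_xi_part
    by (simp add: projs_def p1_def p2_def F)
qed

end

theorem lemma2p1:
  fixes n :: nat and \<phi> :: "'v::euclidean_space \<Rightarrow> 'v" and \<xi> :: 'v
    and \<eta> :: "'v \<Rightarrow> real" and g :: "'v \<Rightarrow> 'v \<Rightarrow> real"
  assumes "apn_structure n \<phi> \<xi> \<eta> g"
  shows "(\<forall>i\<in>{1..4}. \<forall>F\<in>Fspace \<phi> \<xi> \<eta> g. projs \<eta> \<xi> i F \<in> Fspace \<phi> \<xi> \<eta> g)
    \<and> (\<forall>i\<in>{1..4}. \<forall>F\<in>Fspace \<phi> \<xi> \<eta> g. projs \<eta> \<xi> i (projs \<eta> \<xi> i F) = projs \<eta> \<xi> i F)
    \<and> (\<forall>F\<in>Fspace \<phi> \<xi> \<eta> g. (\<lambda>X Y Z. p1 \<eta> \<xi> F X Y Z + p2 \<eta> \<xi> F X Y Z + p3 \<eta> \<xi> F X Y Z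
                                          + p4 \<eta> \<xi> F X Y Z) = F)
    \<and> (\<forall>i\<in>{1..4}. \<forall>j\<in>{1..4}. i \<noteq> j \<longrightarrow>
         (\<forall>F\<in>Fspace \<phi> \<xi> \<eta> g. projs \<eta> \<xi> i (projs \<eta> \<xi> j F) = (\<lambda>X Y Z. 0)))
    \<and> (\<forall>i\<in>{1..4}. \<forall>a\<in>struct_group \<phi> \<xi> \<eta> g. \<forall>F\<in>Fspace \<phi> \<xi> \<eta> g.
         projs \<eta> \<xi> i (lam a F) = lam a (projs \<eta> \<xi> i F))"
proof -
  interpret apn n \<phi> \<xi> \<eta> g
    by (rule apn.intro) (fact assms)
  show ?thesis
    using Fspace_projs_closed Fspace_projs_idem Fspace_sum_projs Fspace_projs_orthogonal projs_lam
    by (auto simp: struct_group_def)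
qed

end
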